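(* Let $\alpha\in(0,1)$ be irrational, let $s_\alpha$ be a Sturmian word of angle $\alpha$, and let $n$ be a positive even integer. For $0\le i\le n$, let $t_i$ be the factor of length $n$ associated with the interval $L_i(n)$. Then $t_i$ is an abelian square if and only if either $\lfloor n\alpha\rfloor$ is even and $L_i(n)\subset[0,\{-n\alpha\})$, or $\lfloor n\alpha\rfloor$ is odd and $L_i(n)\subset[\{-n\alpha\},1)$.
   Context: Alphabet $\{a,b\}$; $\{x\}=x-\lfloor x\rfloor$ is the fractional part. For irrational $\alpha\in(0,1)$ and $\rho\in[0,1)$, the Sturmian word $s_{\alpha,\rho}=c_0c_1c_2\cdots$ is defined by $c_m=b$ if $\{\rho+m\alpha\}\in[0,1-\alpha)$ and $c_m=a$ otherwise (or with the intervals $(0,1-\alpha]$ and $(1-\alpha,1]$ instead); all such words have the same set of factors, and $s_\alpha$ denotes any of them. For $i\ge 0$ let $I_b^{-i}=[\{-i\alpha\},\{-(i+1)\alpha\})$, understood circularly on $[0,1)$ (if the left endpoint exceeds the right one it means $[\{-i\alpha\},1)\cup[0,\{-(i+1)\alpha\})$). For $x\in[0,1)$ let $u_n(x)=d_0\cdots d_{n-1}$ with $d_i=b$ if $x\in I_b^{-i}$ and $d_i=a$ otherwise; the factor of $s_{\alpha,\rho}$ of length $n$ at position $j$ is $u_n(\{\rho+j\alpha\})$. Arranging the $n+2$ points $0,1,\{-\alpha\},\dots,\{-n\alpha\}$ in increasing order partitions $[0,1)$ into $n+1$ half-open intervals $L_0(n),\dots,L_n(n)$ (in increasing order); $u_n$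 is constant on each $L_i(n)$, and its value there is the factor $t_i$ associated with $L_i(n)$; these are exactly the $n+1$ distinct factors of length $n$. An abelian square is a word $v_1v_2$ where $v_1,v_2$ have the same numbers of $a$'s and of $b$'s. *)

theory Defs
  imports Complex_Main
begin

datatype letter = a | b

definition circ_ico :: "real \<Rightarrow> real \<Rightarrow> real set" where
  "circ_ico l r = (if l \<le> r then {l..<r} else {l..<1} \<union> {0..<r})"

definition Ib :: "real \<Rightarrow> nat \<Rightarrow> real set" where
  "Ib \<alpha> i = circ_ico (frac (- real i * \<alpha>)) (frac (- real (Suc i) * \<alpha>))"

definition u :: "real \<Rightarrow> nat \<Rightarrow> real \<Rightarrow> letter list" where
  "u \<alpha> n x = map (\<lambda>i. if x \<in> Ib \<alpha> i then b else a) [0..<n]"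

definition pts :: "real \<Rightarrow> nat \<Rightarrow> real list" where
  "pts \<alpha> n = sorted_list_of_set ({0, 1} \<union> (\<lambda>k. frac (- real k * \<alpha>)) ` {1..n})"

definition L :: "real \<Rightarrow> nat \<Rightarrow> nat \<Rightarrow> real set" where
  "L \<alpha> n i = {pts \<alpha> n ! i ..< pts \<alpha> n ! Suc i}"

text \<open>t_i: the factor associated with L_i(n), i.e. the (constant) value of u_n on L_i(n),
  taken at its left endpoint.\<close>
definition t :: "real \<Rightarrow> nat \<Rightarrow> nat \<Rightarrow> letter list" where
  "t \<alpha> n i = u \<alpha> n (pts \<alpha> n ! i)"

definition abelian_square :: "letter list \<Rightarrow> bool" where
  "abelian_square w \<longleftrightarrow> (\<exists>v1 v2. w = v1 @ v2 \<and>
     count_list v1 a = count_list v2 a \<and> count_list v1 b = count_list v2 b)"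

end

theory Submission
  imports Defs
begin

text \<open>The number of \<open>a\<close>'s in the prefix \<open>u\<^sub>k(x)\<close> of the Sturmian word is \<open>\<lfloor>x + k\<alpha>\<rfloor>\<close>.
  For \<open>n = 2m\<close> the two halves of \<open>u\<^sub>n(x)\<close> therefore contain \<open>\<lfloor>x + m\<alpha>\<rfloor>\<close> and
  \<open>\<lfloor>x + n\<alpha>\<rfloor> - \<lfloor>x + m\<alpha>\<rfloor>\<close> letters \<open>a\<close>; since \<open>\<lfloor>x + n\<alpha>\<rfloor>\<close> differs from
  \<open>2\<lfloor>x + m\<alpha>\<rfloor>\<close> by at most one, \<open>u\<^sub>n(x)\<close> is an abelian square iff \<open>\<lfloor>x + n\<alpha>\<rfloor>\<close> is even.
  Finally \<open>\<lfloor>x + n\<alpha>\<rfloor> = \<lfloor>n\<alpha>\<rfloor>\<close> or \<open>\<lfloor>n\<alpha>\<rfloor> + 1\<close> according to whether \<open>x < {-n\<alpha>}\<close>, and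
  \<open>{-n\<alpha>}\<close> is one of the partition points, so each \<open>L\<^sub>i(n)\<close> lies on one side of it.\<close>

lemma mem_Ib_iff_floor_eq:
  fixes \<alpha> x :: real
  assumes "0 \<le> x" "x < 1" "0 < \<alpha>" "\<alpha> < 1"
  shows "x \<in> Ib \<alpha> j \<longleftrightarrow> \<lfloor>x + real (Suc j) * \<alpha>\<rfloor> = \<lfloor>x + real j * \<alpha>\<rfloor>"
proof -
  define P where "P = \<lfloor>- real j * \<alpha>\<rfloor>"
  define p where "p = - real j * \<alpha> - P"
  define Q where "Q = \<lfloor>- real (Suc j) * \<alpha>\<rfloor>"
  define q where "q = - real (Suc j) * \<alpha> - Q"
  have frac_p: "frac (- real j * \<alpha>) = p" and frac_q: "frac (- real (Suc j) * \<alpha>) = q"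
    unfolding p_def P_def q_def Q_def frac_def by simp_all
  have p: "0 \<le> p" "p < 1" and q: "0 \<le> q" "q < 1"
    unfolding p_def P_def q_def Q_def by linarith+
  have "- real (Suc j) * \<alpha> = of_int P + (p - \<alpha>)"
    unfolding p_def by (simp add: algebra_simps)
  then have Q: "Q = P + (if p \<ge> \<alpha> then 0 else -1)"
    unfolding Q_def using p assms by (simp add: floor_eq_iff)
  have "x + real j * \<alpha> = of_int (-P) + (x - p)"
    unfolding p_def by simp
  then have floor_j: "\<lfloor>x + real j * \<alpha>\<rfloor> = - P + (if x \<ge> p then 0 else -1)"
    using p assms by (simp add: floor_eq_iff)
  have "x + real (Suc j) * \<alpha> = of_int (-Q) + (x - q)"
    unfolding q_def by (simp add: algebra_simps)
  then have floor_Suc_j: "\<lfloor>x + real (Suc j) * \<alpha>\<rfloor> = - Q + (if x \<ge> q then 0 else -1)"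
    using q assms by (simp add: floor_eq_iff)
  have "q = p - \<alpha> + (if p \<ge> \<alpha> then 0 else 1)"
    using Q unfolding q_def p_def by (auto simp: algebra_simps)
  then show ?thesis
    unfolding Ib_def circ_ico_def frac_p frac_q floor_j floor_Suc_j Q
    using p q assms by (auto split: if_splits)
qed

lemma u_Suc: "u \<alpha> (Suc k) x = u \<alpha> k x @ [if x \<in> Ib \<alpha> k then b else a]"
  unfolding u_def by simp

lemma count_list_u_a:
  fixes \<alpha> x :: real
  assumes "0 \<le> x" "x < 1" "0 < \<alpha>" "\<alpha> < 1"
  shows "int (count_list (u \<alpha> k x) a) = \<lfloor>x + real k * \<alpha>\<rfloor>"
proof (induction k)
  case 0
  then show ?case using assms by (simp add: u_def floor_eq_iff)
next
  case (Suc k)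
  have "\<lfloor>x + real (Suc k) * \<alpha>\<rfloor> \<in> {\<lfloor>x + real k * \<alpha>\<rfloor>, \<lfloor>x + real k * \<alpha>\<rfloor> + 1}"
    using assms(3,4) by (simp add: floor_eq_iff algebra_simps) linarith
  then show ?case
    using Suc mem_Ib_iff_floor_eq[OF assms, of k] by (auto simp: u_Suc)
qed

lemma length_eq_count_list_a_b: "length w = count_list w a + count_list w b"
proof (induction w)
  case (Cons c w)
  then show ?case by (cases c) auto
qed simp

lemma abelian_square_iff_halves:
  assumes "length w = 2 * m"
  shows "abelian_square w \<longleftrightarrow> count_list (take m w) a = count_list (drop m w) a"
proof
  assume "abelian_square w"
  then obtain v1 v2 where w: "w = v1 @ v2"
    and counts: "count_list v1 a = count_list v2 a" "count_list v1 b = count_list v2 b"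
    unfolding abelian_square_def by blast
  have "length v1 = length v2"
    using counts length_eq_count_list_a_b[of v1] length_eq_count_list_a_b[of v2] by simp
  then have "length v1 = m" using assms w by simp
  then show "count_list (take m w) a = count_list (drop m w) a" using w counts by simp
next
  assume count_a: "count_list (take m w) a = count_list (drop m w) a"
  have "length (take m w) = length (drop m w)" using assms by simp
  then have "count_list (take m w) b = count_list (drop m w) b"
    using count_a length_eq_count_list_a_b[of "take m w"] length_eq_count_list_a_b[of "drop m w"]
    by simp
  then show "abelian_square w"
    unfolding abelian_square_def using count_a append_take_drop_id by metis
qed

lemma double_floor_eq_iff_even:
  fixes x y :: real
  assumes "0 \<le> x" "x < 1"
  shows "2 * \<lfloor>y\<rfloor> = \<lfloor>2 * y - x\<rfloor> \<longleftrightarrow> even \<lfloor>2 * y - x\<rfloor>"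
proof -
  define r where "r = y - \<lfloor>y\<rfloor>"
  have r: "0 \<le> r" "r < 1" unfolding r_def by linarith+
  have "2 * y - x = of_int (2 * \<lfloor>y\<rfloor>) + (2 * r - x)" unfolding r_def by simp
  then have "\<lfloor>2 * y - x\<rfloor> = 2 * \<lfloor>y\<rfloor> + \<lfloor>2 * r - x\<rfloor>"
    by (metis floor_add_int add.commute)
  moreover have "\<lfloor>2 * r - x\<rfloor> \<in> {-1, 0, 1}"
    using r assms by (simp add: floor_eq_iff) linarith
  ultimately show ?thesis by auto
qed

lemma abelian_square_u_iff:
  fixes \<alpha> x :: real
  assumes "0 \<le> x" "x < 1" "0 < \<alpha>" "\<alpha> < 1" "n = 2 * m"
  shows "abelian_square (u \<alpha> n x) \<longleftrightarrow> even \<lfloor>x + real n * \<alpha>\<rfloor>"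
proof -
  have "take m (u \<alpha> n x) = u \<alpha> m x"
    using assms(5) unfolding u_def by (simp add: take_map)
  moreover have "count_list (u \<alpha> n x) a
      = count_list (take m (u \<alpha> n x)) a + count_list (drop m (u \<alpha> n x)) a"
    by (metis append_take_drop_id count_list_append)
  ultimately have "abelian_square (u \<alpha> n x)
      \<longleftrightarrow> 2 * int (count_list (u \<alpha> m x) a) = int (count_list (u \<alpha> n x) a)"
    using abelian_square_iff_halves[of "u \<alpha> n x" m] assms(5) by (simp add: u_def)
  also have "\<dots> \<longleftrightarrow> 2 * \<lfloor>x + real m * \<alpha>\<rfloor> = \<lfloor>2 * (x + real m * \<alpha>) - x\<rfloor>"
    using count_list_u_a[OF assms(1-4)] assms(5) by (simp add: algebra_simps)
  also have "\<dots> \<longleftrightarrow> even \<lfloor>2 * (x + real m * \<alpha>) - x\<rfloor>"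
    by (rule double_floor_eq_iff_even[OF assms(1,2)])
  also have "2 * (x + real m * \<alpha>) - x = x + real n * \<alpha>"
    using assms(5) by (simp add: algebra_simps)
  finally show ?thesis .
qed

lemma of_int_mult_irrational_notin_Ints:
  fixes \<alpha> :: real and k :: int
  assumes "\<alpha> \<notin> \<rat>" "k \<noteq> 0"
  shows "of_int k * \<alpha> \<notin> \<int>"
proof
  assume "of_int k * \<alpha> \<in> \<int>"
  then obtain z where "of_int k * \<alpha> = of_int z" by (auto elim: Ints_cases)
  then have "\<alpha> = of_int z / of_int k" using assms(2) by (simp add: field_simps)
  with assms(1) show False by simp
qed

lemma floor_add_eq_if_less_frac_uminus:
  fixes r x :: real
  assumes "r \<notin> \<int>" "0 \<le> x" "x < 1"
  shows "\<lfloor>x + r\<rfloor> = \<lfloor>r\<rfloor> + (if x < frac (- r) then 0 else 1)"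
proof -
  have "\<lfloor>x + r\<rfloor> = \<lfloor>r\<rfloor> + \<lfloor>x + frac r\<rfloor>"
    using floor_add_int[of "x + frac r" "\<lfloor>r\<rfloor>"] unfolding frac_def by (simp add: add.commute)
  moreover have "frac (- r) = 1 - frac r" using assms(1) by (simp add: frac_neg)
  moreover have "0 \<le> frac r" "frac r < 1" by (simp_all add: frac_lt_1)
  then have "\<lfloor>x + frac r\<rfloor> = (if x < 1 - frac r then 0 else 1)"
    using assms(2,3) by (simp add: floor_eq_iff)
  ultimately show ?thesis by simp
qed

lemma card_pts_set:
  fixes \<alpha> :: real
  assumes "\<alpha> \<notin> \<rat>"
  shows "card ({0, 1} \<union> (\<lambda>k. frac (- real k * \<alpha>)) ` {1..n}) = n + 2"
proof -
  let ?f = "\<lambda>k::nat. frac (- real k * \<alpha>)"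
  have "inj_on ?f {1..n}"
  proof (rule inj_onI)
    fix k k' :: nat assume "?f k = ?f k'"
    then have "of_int (int k' - int k) * \<alpha> = of_int (\<lfloor>- real k * \<alpha>\<rfloor> - \<lfloor>- real k' * \<alpha>\<rfloor>)"
      unfolding frac_def by (simp add: algebra_simps)
    then have "int k' - int k = 0"
      using of_int_mult_irrational_notin_Ints[OF assms] by (metis Ints_of_int)
    then show "k = k'" by simp
  qed
  moreover have "0 < ?f k \<and> ?f k < 1" if "k \<in> {1..n}" for k
    using of_int_mult_irrational_notin_Ints[OF assms, of "- int k"] that frac_lt_1
    by (simp add: frac_gt_0_iff)
  then have "{0, 1} \<inter> ?f ` {1..n} = {}" by fastforce
  ultimately show ?thesis by (simp add: card_Un_disjoint card_image)
qed

lemma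
  fixes \<alpha> :: real
  assumes "\<alpha> \<notin> \<rat>"
  shows length_pts: "length (pts \<alpha> n) = n + 2"
    and set_pts: "set (pts \<alpha> n) = {0, 1} \<union> (\<lambda>k. frac (- real k * \<alpha>)) ` {1..n}"
    and sorted_wrt_pts: "sorted_wrt (<) (pts \<alpha> n)"
  using card_pts_set[OF assms]
  by (simp_all only: pts_def length_sorted_list_of_set set_sorted_list_of_set
      strict_sorted_list_of_set finite_UnI finite_imageI finite_atLeastAtMost finite.intros)

lemma pts_subset_01: "set (pts \<alpha> n) \<subseteq> {0..1}"
  unfolding pts_def by (subst set_sorted_list_of_set) (auto simp: frac_lt_1 less_imp_le)

lemma sorted_wrt_less_nth_less_iff:
  fixes xs :: "'a::linorder list"
  assumes "sorted_wrt (<) xs" "Suc i < length xs" "c \<in> set xs"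
  shows "xs ! i < c \<longleftrightarrow> xs ! Suc i \<le> c"
proof -
  obtain k where k: "k < length xs" "xs ! k = c" using assms(3) by (meson in_set_conv_nth)
  have mono: "xs ! j \<le> xs ! l" if "j \<le> l" "l < length xs" for j l
    using sorted_nth_mono assms(1) that by (auto simp: strict_sorted_iff)
  have step: "xs ! i < xs ! Suc i" using sorted_wrt_nth_less[OF assms(1)] assms(2) by simp
  show ?thesis
  proof (cases "i < k")
    case True
    then show ?thesis using step mono[of "Suc i" k] k by simp
  next
    case False
    then show ?thesis using step mono[of k i] k assms(2) by auto
  qed
qed

theorem proposition4:
  fixes \<alpha> :: real and n i :: nat
  assumes "0 < \<alpha>" "\<alpha> < 1" "\<alpha> \<notin> \<rat>"
    and "n > 0" "even n" "i \<le> n"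
  shows "abelian_square (t \<alpha> n i) \<longleftrightarrow>
           (even \<lfloor>real n * \<alpha>\<rfloor> \<and> L \<alpha> n i \<subseteq> {0..<frac (- real n * \<alpha>)}) \<or>
           (odd \<lfloor>real n * \<alpha>\<rfloor> \<and> L \<alpha> n i \<subseteq> {frac (- real n * \<alpha>)..<1})"
proof -
  define x where "x = pts \<alpha> n ! i"
  define y where "y = pts \<alpha> n ! Suc i"
  define c where "c = frac (- real n * \<alpha>)"
  have i: "Suc i < length (pts \<alpha> n)" using length_pts[OF assms(3)] assms(6) by simp
  have xy: "x < y"
    unfolding x_def y_def using sorted_wrt_nth_less[OF sorted_wrt_pts[OF assms(3)] _ i] by simp
  have x0: "0 \<le> x" and y1: "y \<le> 1"
    unfolding x_def y_def using pts_subset_01 i by (meson Suc_lessD atLeastAtMost_iff nth_mem subsetD)+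
  have below_c: "x < c \<longleftrightarrow> y \<le> c"
    unfolding x_def y_def c_def using assms(3,4) i
    by (intro sorted_wrt_less_nth_less_iff sorted_wrt_pts) (auto simp: set_pts)
  obtain m where "n = 2 * m" using assms(5) by blast
  then have abelian: "abelian_square (t \<alpha> n i) \<longleftrightarrow> even \<lfloor>x + real n * \<alpha>\<rfloor>"
    unfolding t_def x_def[symmetric] using abelian_square_u_iff assms(1,2) x0 xy y1 by simp
  have floor_shift: "\<lfloor>x + real n * \<alpha>\<rfloor> = \<lfloor>real n * \<alpha>\<rfloor> + (if x < c then 0 else 1)"
    unfolding c_def using floor_add_eq_if_less_frac_uminus[of "real n * \<alpha>" x] x0 xy y1
      of_int_mult_irrational_notin_Ints[OF assms(3), of "int n"] assms(4) by simp
  have "L \<alpha> n i = {x..<y}" unfolding L_def x_def y_def ..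
  then show ?thesis unfolding c_def[symmetric] abelian floor_shift using xy x0 y1 below_c by auto
qed

end
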